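(* Let $p,q\in\mathbb{C}$, $N=N_1+N_2+\dots+N_s$, and let $$\Gamma=\mathrm{Diag}\big(\Gamma^{[N_1]}_D(k_1,\dots,k_{N_1}),\ \Gamma^{[N_2]}_J(\kappa_2),\ \dots,\ \Gamma^{[N_s]}_J(\kappa_s)\big)$$ (block diagonal), where all eigenvalues $\lambda,\mu$ of $\Gamma$ satisfy $\lambda+\mu\ne0$ and $p,q\notin\{\pm\lambda\}$. Let $c=(c^{(1)},c^{(2)},\dots,c^{(s)})$ be a constant row vector of length $N$, with $c^{(1)}=(c_1,\dots,c_{N_1})$ and $c^{(j)}$ of length $N_j$. Define $$r=\begin{pmatrix} r^{[N_1]}_D(k_1,\dots,k_{N_1})\\ r^{[N_2]}_J(\kappa_2)\\ \vdots\\ r^{[N_s]}_J(\kappa_s)\end{pmatrix},\qquad M=FGH,$$ with $F=\mathrm{Diag}(F^{[N_1]}_D(k_1,\dots,k_{N_1}),F^{[N_2]}_J(\kappa_2),\dots,F^{[N_s]}_J(\kappa_s))$, $H=\mathrm{Diag}(H^{[N_1]}_D(c^{(1)}),H^{[N_2]}_J(c^{(2)}),\dots,H^{[N_s]}_J(c^{(s)}))$, and $G=(G_{i,j})_{i,j=1}^s$ the symmetric block matrix with $N_i\times N_j$ blocks $$G_{1,1}=G^{[N_1]}_D(k_1,\dots,k_{N_1}),\quad G_{1,j}=G_{j,1}^T=G^{[N_1,N_j]}_{DJ}(k_1,\dots,k_{N_1};\kappa_j)\ (1<j\le s),$$ $$G_{i,j}=G_{j,i}^T=G^{[N_i,N_j]}_{JJ}(\kappa_i;\kappa_j)\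 (1<i\le j\le s).$$ Then, for all $(n,m)\in\mathbb{Z}^2$, $$(pI-\Gamma)\tilde r=(pI+\Gamma)r,\qquad (qI-\Gamma)\hat r=(qI+\Gamma)r,\qquad M\Gamma+\Gamma M=r\,c .$$ Furthermore, for $\mathcal{A}=\mathrm{Diag}(I_{N_1},\mathcal{A}_2,\dots,\mathcal{A}_s)$ with each $\mathcal{A}_j$ an arbitrary constant $N_j\times N_j$ lower triangular Toeplitz matrix, the pair $(\mathcal{A}r,\mathcal{A}M)$ also satisfies these three equations with the same $\Gamma$ and $c$.
   Context: For $f$ on $\mathbb{Z}^2$: $\tilde f(n,m)=f(n+1,m)$, $\hat f(n,m)=f(n,m+1)$. Plane wave factor: $\rho(k)=\big(\tfrac{p+k}{p-k}\big)^n\big(\tfrac{q+k}{q-k}\big)^m\rho^0$, with the constant $\rho^0$ allowed to depend on which eigenvalue/position it is attached to but not on $k$ under differentiation; write $\rho_i=\rho(k_i)$. $\Gamma^{[N_1]}_D(k_1,\dots,k_{N_1})=\mathrm{Diag}(k_1,\dots,k_{N_1})$; $r^{[N_1]}_D=(\rho_1,\dots,\rho_{N_1})^T$; $F^{[N_1]}_D=\mathrm{Diag}(\rho_1,\dots,\rho_{N_1})$; $H^{[N_1]}_D(c_1,\dots,c_{N_1})=\mathrm{Diag}(c_1,\dots,c_{N_1})$. $\Gamma^{[N]}_J(\kappa)$: $N\times N$ with $\kappa$ on the diagonal, $1$ on the subdiagonal, $0$ elsewhere. $r^{[N]}_J(\kappa)=\big(\rho,\frac{\partial_k\rho}{1!},\dots,\frac{\partial_k^{N-1}\rho}{(N-1)!}\big)^T|_{k=\kappa}$.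 $F^{[N]}_J(\kappa)$: lower triangular with $(i,j)$ entry $\frac{1}{(i-j)!}\partial_k^{i-j}\rho|_{k=\kappa}$ for $i\ge j$. $H^{[N]}_J(d_1,\dots,d_N)$: $(i,j)$ entry $d_{i+j-1}$ if $i+j-1\le N$, else $0$. $G^{[N]}_D(k_1,\dots,k_N)$: $(i,j)$ entry $\frac1{k_i+k_j}$. $G^{[N_1,N_2]}_{DJ}(k_1,\dots,k_{N_1};b)$: $N_1\times N_2$, $(i,j)$ entry $-\big(\frac{-1}{k_i+b}\big)^j$. $G^{[N_1,N_2]}_{JJ}(a;b)$: $N_1\times N_2$, $(i,j)$ entry $\binom{i+j-2}{i-1}\frac{(-1)^{i+j}}{(a+b)^{i+j-1}}$. A lower triangular Toeplitz matrix is $(a_{i-j})$ with $a_l=0$ for $l<0$. The block sizes $N_1\ge0$, $N_j\ge1$; empty blocks are omitted. *)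

theory Defs
  imports "HOL-Analysis.Analysis"
begin

text \<open>Matrices are functions nat => nat => complex with an explicit size N
  (indices 0..N-1); vectors are functions nat => complex.
  Block structure: block sizes list L = N1 # Ns, block 0 is the diagonal block
  (size N1, possibly 0), blocks b = 1..length Ns are Jordan blocks of size Ns!(b-1).\<close>

definition mmul :: "nat \<Rightarrow> (nat \<Rightarrow> nat \<Rightarrow> complex) \<Rightarrow> (nat \<Rightarrow> nat \<Rightarrow> complex) \<Rightarrow> nat \<Rightarrow> nat \<Rightarrow> complex" where
  "mmul N A B i j = (\<Sum>l<N. A i l * B l j)"

definition mvec :: "nat \<Rightarrow> (nat \<Rightarrow> nat \<Rightarrow> complex) \<Rightarrow> (nat \<Rightarrow> complex) \<Rightarrow> nat \<Rightarrow> complex" where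
  "mvec N A v i = (\<Sum>l<N. A i l * v l)"

definition idm :: "nat \<Rightarrow> nat \<Rightarrow> complex" where
  "idm i j = (if i = j then 1 else 0)"

definition is_eigenvalue :: "nat \<Rightarrow> (nat \<Rightarrow> nat \<Rightarrow> complex) \<Rightarrow> complex \<Rightarrow> bool" where
  "is_eigenvalue N A lam \<longleftrightarrow>
     (\<exists>v. (\<exists>i<N. v i \<noteq> 0) \<and> (\<forall>i<N. mvec N A v i = lam * v i))"

definition blk :: "nat list \<Rightarrow> nat \<Rightarrow> nat" where
  "blk L i = (LEAST b. i < sum_list (take (Suc b) L))"

definition off :: "nat list \<Rightarrow> nat \<Rightarrow> nat" where
  "off L b = sum_list (take b L)"

definition loc :: "nat list \<Rightarrow> nat \<Rightarrow> nat" where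
  "loc L i = i - off L (blk L i)"

definition rho :: "complex \<Rightarrow> complex \<Rightarrow> int \<Rightarrow> int \<Rightarrow> complex \<Rightarrow> complex \<Rightarrow> complex" where
  "rho p q n m r0 z = ((p + z) / (p - z)) powi n * ((q + z) / (q - z)) powi m * r0"

definition dk :: "nat \<Rightarrow> (complex \<Rightarrow> complex) \<Rightarrow> complex \<Rightarrow> complex" where
  "dk j f z = (deriv ^^ j) f z"

definition Gam :: "nat \<Rightarrow> (nat \<Rightarrow> complex) \<Rightarrow> nat list \<Rightarrow> (nat \<Rightarrow> complex) \<Rightarrow> nat \<Rightarrow> nat \<Rightarrow> complex" where
  "Gam N1 k Ns kap i j =
    (let L = N1 # Ns; bi = blk L i; bj = blk L j; a = loc L i; b = loc L j in
     if bi \<noteq> bj then 0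
     else if bi = 0 then (if a = b then k a else 0)
     else if a = b then kap bi else if a = b + 1 then 1 else 0)"

definition rvec :: "complex \<Rightarrow> complex \<Rightarrow> nat \<Rightarrow> (nat \<Rightarrow> complex) \<Rightarrow> (nat \<Rightarrow> complex)
    \<Rightarrow> nat list \<Rightarrow> (nat \<Rightarrow> complex) \<Rightarrow> (nat \<Rightarrow> complex) \<Rightarrow> int \<Rightarrow> int \<Rightarrow> nat \<Rightarrow> complex" where
  "rvec p q N1 k r0D Ns kap r0J n m i =
    (let L = N1 # Ns; bi = blk L i; a = loc L i in
     if bi = 0 then rho p q n m (r0D a) (k a)
     else dk a (rho p q n m (r0J bi)) (kap bi) / fact a)"

definition Fmat :: "complex \<Rightarrow> complex \<Rightarrow> nat \<Rightarrow> (nat \<Rightarrow> complex) \<Rightarrow> (nat \<Rightarrow> complex)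
    \<Rightarrow> nat list \<Rightarrow> (nat \<Rightarrow> complex) \<Rightarrow> (nat \<Rightarrow> complex) \<Rightarrow> int \<Rightarrow> int \<Rightarrow> nat \<Rightarrow> nat \<Rightarrow> complex" where
  "Fmat p q N1 k r0D Ns kap r0J n m i j =
    (let L = N1 # Ns; bi = blk L i; bj = blk L j; a = loc L i; b = loc L j in
     if bi \<noteq> bj then 0
     else if bi = 0 then (if a = b then rho p q n m (r0D a) (k a) else 0)
     else if b \<le> a then dk (a - b) (rho p q n m (r0J bi)) (kap bi) / fact (a - b)
     else 0)"

text \<open>c is the global row vector (c^(1),...,c^(s)), indexed 0..N-1\<close>
definition Hmat :: "nat \<Rightarrow> nat list \<Rightarrow> (nat \<Rightarrow> complex) \<Rightarrow> nat \<Rightarrow> nat \<Rightarrow> complex" where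
  "Hmat N1 Ns c i j =
    (let L = N1 # Ns; bi = blk L i; bj = blk L j; a = loc L i; b = loc L j in
     if bi \<noteq> bj then 0
     else if bi = 0 then (if a = b then c i else 0)
     else if a + b < L ! bi then c (off L bi + a + b) else 0)"

definition Gmat :: "nat \<Rightarrow> (nat \<Rightarrow> complex) \<Rightarrow> nat list \<Rightarrow> (nat \<Rightarrow> complex) \<Rightarrow> nat \<Rightarrow> nat \<Rightarrow> complex" where
  "Gmat N1 k Ns kap i j =
    (let L = N1 # Ns; bi = blk L i; bj = blk L j; a = loc L i; b = loc L j in
     if bi = 0 \<and> bj = 0 then 1 / (k a + k b)
     else if bi = 0 then - ((- 1 / (k a + kap bj)) ^ (b + 1))
     else if bj = 0 then - ((- 1 / (k b + kap bi)) ^ (a + 1))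
     else of_nat ((a + b) choose a) * (- 1) ^ (a + b) / (kap bi + kap bj) ^ (a + b + 1))"

definition Mmat :: "complex \<Rightarrow> complex \<Rightarrow> nat \<Rightarrow> (nat \<Rightarrow> complex) \<Rightarrow> (nat \<Rightarrow> complex)
    \<Rightarrow> nat list \<Rightarrow> (nat \<Rightarrow> complex) \<Rightarrow> (nat \<Rightarrow> complex) \<Rightarrow> (nat \<Rightarrow> complex) \<Rightarrow> int \<Rightarrow> int \<Rightarrow> nat \<Rightarrow> nat \<Rightarrow> complex" where
  "Mmat p q N1 k r0D Ns kap r0J c n m =
    (let N = sum_list (N1 # Ns) in
     mmul N (mmul N (Fmat p q N1 k r0D Ns kap r0J n m) (Gmat N1 k Ns kap)) (Hmat N1 Ns c))"

text \<open>A = Diag(I_{N1}, A_2, ..., A_s), A_b lower triangular Toeplitz with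
  entries aseq b 0, aseq b 1, ... (constant, i.e. independent of n, m)\<close>
definition Amat :: "nat \<Rightarrow> nat list \<Rightarrow> (nat \<Rightarrow> nat \<Rightarrow> complex) \<Rightarrow> nat \<Rightarrow> nat \<Rightarrow> complex" where
  "Amat N1 Ns aseq i j =
    (let L = N1 # Ns; bi = blk L i; bj = blk L j; a = loc L i; b = loc L j in
     if bi \<noteq> bj then 0
     else if bi = 0 then (if a = b then 1 else 0)
     else if b \<le> a then aseq bi (a - b) else 0)"

definition sat_eqs :: "nat \<Rightarrow> complex \<Rightarrow> complex \<Rightarrow> (nat \<Rightarrow> nat \<Rightarrow> complex) \<Rightarrow> (nat \<Rightarrow> complex)
    \<Rightarrow> (int \<Rightarrow> int \<Rightarrow> nat \<Rightarrow> complex) \<Rightarrow> (int \<Rightarrow> int \<Rightarrow> nat \<Rightarrow> nat \<Rightarrow> complex) \<Rightarrow> bool" where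
  "sat_eqs N p q G c r M \<longleftrightarrow>
    (\<forall>n m.
      (\<forall>i<N. mvec N (\<lambda>i j. p * idm i j - G i j) (r (n + 1) m) i
              = mvec N (\<lambda>i j. p * idm i j + G i j) (r n m) i) \<and>
      (\<forall>i<N. mvec N (\<lambda>i j. q * idm i j - G i j) (r n (m + 1)) i
              = mvec N (\<lambda>i j. q * idm i j + G i j) (r n m) i) \<and>
      (\<forall>i<N. \<forall>j<N. mmul N (M n m) G i j + mmul N G (M n m) i j = r n m i * c j))"

end

theory Submission
  imports Defs "HOL-Complex_Analysis.Laurent_Convergence"
begin

(* Write lambda_i for the i-th diagonal entry of Gamma (each is an eigenvalue of Gamma)
   and e for the vector with entry 1 at every position of the diagonal block and at the
   first position of every Jordan block, 0 elsewhere.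

   On the diagonal block the entries of r are plane wave
       factors rho(k), and (p - k) rho~(k) = (p + k) rho(k).  On a Jordan block the
       entries are Taylor coefficients of rho at kappa; comparing Taylor coefficients in
       (p - z) rho~(z) = (p + z) rho(z) gives exactly the rows of (pI - Gamma) r~ = (pI + Gamma) r.
       The same argument with q and the m-shift gives the second relation.
   (2) Sylvester equation.  F is block lower triangular Toeplitz, hence F Gamma = Gamma F;
       H is block Hankel, hence H Gamma = Gamma^T H; and the entries of G satisfy a
       Pascal-type recurrence which says Gamma G + G Gamma^T = e e^T.  For M = F G H this
       yields M Gamma + Gamma M = (F e)(e^T H) = r c.
   (3) A is block lower triangular Toeplitz too, and every matrix commuting with Gamma
       maps solutions (r, M) of the three equations to solutions (A r, A M). *)

lemma off_Suc: "b < length L \<Longrightarrow> off L (Suc b) = off L b + L ! b"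
  by (simp add: off_def take_Suc_conv_app_nth)

lemma off_mono: "b \<le> b' \<Longrightarrow> off L b \<le> off L b'"
proof -
  assume "b \<le> b'"
  then obtain d where "b' = b + d" using le_Suc_ex by blast
  thus ?thesis by (simp add: off_def take_add)
qed

lemma blk_bounds:
  assumes "i < sum_list L"
  shows "blk L i < length L \<and> off L (blk L i) \<le> i \<and> i < off L (blk L i) + L ! blk L i"
proof -
  let ?P = "\<lambda>b. i < sum_list (take (Suc b) L)"
  have ex: "?P (length L - 1)"
    using assms by (cases L) auto
  have le: "blk L i \<le> length L - 1" unfolding blk_def by (rule Least_le[of ?P, OF ex])
  have sat: "?P (blk L i)" unfolding blk_def by (rule LeastI[of ?P, OF ex])
  have lt: "blk L i < length L" using le assms by (cases L) auto
  have start: "off L (blk L i) \<le> i"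
  proof (cases "blk L i")
    case 0 then show ?thesis by (simp add: off_def)
  next
    case (Suc b)
    have "\<not> ?P b" using not_less_Least[of b ?P] Suc unfolding blk_def by auto
    then show ?thesis using Suc by (simp add: off_def)
  qed
  show ?thesis using lt start sat off_Suc[OF lt] by (simp add: off_def)
qed

lemma blk_unique:
  assumes "b < length L" "off L b \<le> i" "i < off L b + L ! b"
  shows "blk L i = b"
proof -
  have sat: "i < sum_list (take (Suc b) L)" using assms off_Suc[of b L] by (simp add: off_def)
  have "\<forall>b'<b. \<not> i < sum_list (take (Suc b') L)"
  proof (intro allI impI)
    fix b' assume "b' < b"
    then have "off L (Suc b') \<le> off L b" by (intro off_mono) simp
    then show "\<not> i < sum_list (take (Suc b') L)" using assms by (simp add: off_def)
  qed
  then show ?thesis unfolding blk_def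
    by (metis (mono_tags, lifting) sat Least_equality not_less)
qed

lemma index_decomp: "i < sum_list L \<Longrightarrow> i = off L (blk L i) + loc L i \<and> loc L i < L ! blk L i"
  using blk_bounds[of i L] by (auto simp: loc_def)

lemma block_end_le: "b < length L \<Longrightarrow> off L b + L ! b \<le> sum_list L"
  using off_mono[of "Suc b" "length L" L] off_Suc[of b L] by (simp add: off_def)

lemma prev_in_block:
  assumes "i < sum_list L" "1 \<le> loc L i"
  shows "blk L (i - 1) = blk L i \<and> loc L (i - 1) = loc L i - 1"
proof -
  have "blk L (i - 1) = blk L i"
    using blk_bounds[OF assms(1)] assms(2) index_decomp[OF assms(1)] by (intro blk_unique) auto
  then show ?thesis using index_decomp[OF assms(1)] by (auto simp: loc_def)
qed

lemma next_in_block: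
  assumes "i < sum_list L" "loc L i + 1 < L ! blk L i"
  shows "i + 1 < sum_list L \<and> blk L (i + 1) = blk L i \<and> loc L (i + 1) = loc L i + 1"
proof -
  have lt: "i + 1 < sum_list L"
    using index_decomp[OF assms(1)] assms(2) block_end_le[of "blk L i" L] blk_bounds[OF assms(1)]
    by linarith
  have "blk L (i + 1) = blk L i"
    using blk_bounds[OF assms(1)] assms(2) index_decomp[OF assms(1)] by (intro blk_unique) auto
  then show ?thesis using index_decomp[OF assms(1)] lt by (auto simp: loc_def)
qed

lemma same_block_index:
  assumes "i < sum_list L" "j < sum_list L" "blk L i = blk L j"
  shows "(i = j \<longleftrightarrow> loc L i = loc L j) \<and> (i = j + 1 \<longleftrightarrow> loc L i = loc L j + 1)"
proof -
  have "i = off L (blk L i) + loc L i" using index_decomp[OF assms(1)] by blast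
  moreover have "j = off L (blk L i) + loc L j" using index_decomp[OF assms(2)] assms(3) by simp
  ultimately show ?thesis by arith
qed

lemma block_start:
  assumes "i < sum_list L"
  shows "off L (blk L i) < sum_list L \<and> blk L (off L (blk L i)) = blk L i \<and> loc L (off L (blk L i)) = 0"
proof -
  have p: "blk L i < length L" "off L (blk L i) \<le> i" "i < off L (blk L i) + L ! blk L i"
    using blk_bounds[OF assms] by auto
  have "blk L (off L (blk L i)) = blk L i" using p by (intro blk_unique) auto
  then show ?thesis using p assms by (auto simp: loc_def)
qed

abbreviation jordan_pred :: "nat list \<Rightarrow> nat \<Rightarrow> bool" where
  "jordan_pred L i \<equiv> blk L i \<noteq> 0 \<and> 1 \<le> loc L i"

abbreviation jordan_succ :: "nat list \<Rightarrow> nat \<Rightarrow> bool" where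
  "jordan_succ L i \<equiv> blk L i \<noteq> 0 \<and> loc L i + 1 < L ! blk L i"

definition gam_diag ::
    "nat \<Rightarrow> (nat \<Rightarrow> complex) \<Rightarrow> nat list \<Rightarrow> (nat \<Rightarrow> complex) \<Rightarrow> nat \<Rightarrow> complex" where
  "gam_diag N1 k Ns kap i = (if blk (N1#Ns) i = 0 then k (loc (N1#Ns) i) else kap (blk (N1#Ns) i))"

lemma Gam_row:
  assumes "i < sum_list (N1#Ns)" "l < sum_list (N1#Ns)"
  shows "Gam N1 k Ns kap i l = (if l = i then gam_diag N1 k Ns kap i
     else if jordan_pred (N1#Ns) i \<and> l = i - 1 then 1 else 0)"
proof -
  let ?L = "N1#Ns"
  show ?thesis
  proof (cases "blk ?L i = blk ?L l")
    case True
    have E: "(i = l \<longleftrightarrow> loc ?L i = loc ?L l) \<and> (i = l + 1 \<longleftrightarrow> loc ?L i = loc ?L l + 1)"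
      using same_block_index[OF assms True] .
    have "1 \<le> loc ?L i \<Longrightarrow> 1 \<le> i" using index_decomp[OF assms(1)] by linarith
    then have G: "(1 \<le> loc ?L i \<and> l = i - 1) \<longleftrightarrow> loc ?L i = loc ?L l + 1" using E by auto
    show ?thesis
    proof (cases "l = i")
      case True then show ?thesis by (simp add: Gam_def gam_diag_def Let_def)
    next
      case False
      then have "loc ?L i \<noteq> loc ?L l" using E by auto
      then show ?thesis using False True G unfolding Gam_def gam_diag_def Let_def by auto
    qed
  next
    case False
    have "\<not> (1 \<le> loc ?L i \<and> l = i - 1)" using prev_in_block[OF assms(1)] False by auto
    then show ?thesis using False by (auto simp: Gam_def gam_diag_def Let_def)
  qed
qed

lemma Gam_col:
  assumes "j < sum_list (N1#Ns)" "l < sum_list (N1#Ns)"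
  shows "Gam N1 k Ns kap l j = (if l = j then gam_diag N1 k Ns kap j
     else if jordan_succ (N1#Ns) j \<and> l = j + 1 then 1 else 0)"
proof -
  let ?L = "N1#Ns"
  show ?thesis
  proof (cases "blk ?L j = blk ?L l")
    case True
    have E: "(l = j \<longleftrightarrow> loc ?L l = loc ?L j) \<and> (l = j + 1 \<longleftrightarrow> loc ?L l = loc ?L j + 1)"
      using same_block_index[OF assms(2,1)] True by simp
    have "loc ?L l < ?L ! blk ?L j" using index_decomp[OF assms(2)] True by simp
    then have G: "(loc ?L j + 1 < ?L ! blk ?L j \<and> l = j + 1) \<longleftrightarrow> loc ?L l = loc ?L j + 1"
      using E by auto
    show ?thesis
    proof (cases "l = j")
      case True then show ?thesis by (simp add: Gam_def gam_diag_def Let_def)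
    next
      case False
      then have "loc ?L l \<noteq> loc ?L j" using E by auto
      then show ?thesis using False True G unfolding Gam_def gam_diag_def Let_def by auto
    qed
  next
    case False
    have "\<not> (loc ?L j + 1 < ?L ! blk ?L j \<and> l = j + 1)" using next_in_block[OF assms(1)] False by auto
    then show ?thesis using False by (auto simp: Gam_def gam_diag_def Let_def)
  qed
qed

lemma sum_two_entries:
  fixes a b :: complex and i j N :: nat
  assumes "i < N"
  shows "(\<Sum>l<N. (if l = i then a else if P \<and> l = j then b else 0) * v l)
       = a * v i + (if P \<and> j < N \<and> j \<noteq> i then b * v j else 0)"
proof -
  have "(\<Sum>l<N. (if l = i then a else if P \<and> l = j then b else 0) * v l)
     = (\<Sum>l<N. (if l = i then a * v i else 0) + (if l = j then (if P \<and> j \<noteq> i then b * v j else 0) else 0))"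
    by (rule sum.cong) auto
  also have "\<dots> = a * v i + (if P \<and> j < N \<and> j \<noteq> i then b * v j else 0)"
    using assms by (simp add: sum.distrib sum.delta)
  finally show ?thesis .
qed

lemma Gam_times_vec:
  assumes "i < sum_list (N1#Ns)"
  shows "(\<Sum>l<sum_list (N1#Ns). Gam N1 k Ns kap i l * v l)
       = gam_diag N1 k Ns kap i * v i + (if jordan_pred (N1#Ns) i then v (i - 1) else 0)"
proof -
  have "(\<Sum>l<sum_list (N1#Ns). Gam N1 k Ns kap i l * v l)
      = (\<Sum>l<sum_list (N1#Ns). (if l = i then gam_diag N1 k Ns kap i
           else if jordan_pred (N1#Ns) i \<and> l = i - 1 then 1 else 0) * v l)"
    by (rule sum.cong[OF refl]) (simp add: Gam_row[OF assms])
  also have "\<dots> = gam_diag N1 k Ns kap i * v i + (if jordan_pred (N1#Ns) i then v (i - 1) else 0)"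
    using index_decomp[OF assms] assms by (subst sum_two_entries) auto
  finally show ?thesis .
qed

lemma vec_times_Gam:
  assumes "j < sum_list (N1#Ns)"
  shows "(\<Sum>l<sum_list (N1#Ns). Gam N1 k Ns kap l j * v l)
       = gam_diag N1 k Ns kap j * v j + (if jordan_succ (N1#Ns) j then v (j + 1) else 0)"
proof -
  have "(\<Sum>l<sum_list (N1#Ns). Gam N1 k Ns kap l j * v l)
      = (\<Sum>l<sum_list (N1#Ns). (if l = j then gam_diag N1 k Ns kap j
           else if jordan_succ (N1#Ns) j \<and> l = j + 1 then 1 else 0) * v l)"
    by (rule sum.cong[OF refl]) (simp add: Gam_col[OF assms])
  also have "\<dots> = gam_diag N1 k Ns kap j * v j + (if jordan_succ (N1#Ns) j then v (j + 1) else 0)"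
    using next_in_block[OF assms] by (subst sum_two_entries[OF assms]) auto
  finally show ?thesis .
qed

(* Each lambda_i is an eigenvalue of Gamma: a unit vector at i (diagonal block) or at the
   last position of the Jordan block of i is an eigenvector.  This is how the hypotheses
   of the theorem, stated for eigenvalues, reach the individual diagonal entries. *)
lemma gam_diag_eigenvalue:
  assumes i: "i < sum_list (N1#Ns)"
  shows "is_eigenvalue (sum_list (N1#Ns)) (Gam N1 k Ns kap) (gam_diag N1 k Ns kap i)"
proof -
  let ?L = "N1#Ns" and ?N = "sum_list (N1#Ns)"
  define j where "j = (if blk ?L i = 0 then i else off ?L (blk ?L i) + ?L ! blk ?L i - 1)"
  have p: "blk ?L i < length ?L" "off ?L (blk ?L i) \<le> i" "i < off ?L (blk ?L i) + ?L ! blk ?L i"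
    using blk_bounds[OF i] by auto
  have jN: "j < ?N" using p block_end_le[of "blk ?L i" ?L] i unfolding j_def by auto
  have bj: "blk ?L j = blk ?L i" unfolding j_def using p by (auto intro: blk_unique)
  have gj: "gam_diag N1 k Ns kap j = gam_diag N1 k Ns kap i"
  proof (cases "blk ?L i = 0")
    case True then show ?thesis by (simp add: j_def)
  next
    case False then show ?thesis using bj by (simp add: gam_diag_def)
  qed
  have nc: "\<not> jordan_succ ?L j"
  proof (cases "blk ?L i = 0")
    case True then show ?thesis using bj by simp
  next
    case False
    have "loc ?L j = ?L ! blk ?L i - 1" using bj p False by (simp add: loc_def j_def)
    then show ?thesis using bj p by simp
  qed
  define v where "v = (\<lambda>l. if l = j then (1::complex) else 0)"
  have "\<forall>t<?N. mvec ?N (Gam N1 k Ns kap) v t = gam_diag N1 k Ns kap i * v t"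
  proof (intro allI impI)
    fix t assume t: "t < ?N"
    have "mvec ?N (Gam N1 k Ns kap) v t = (\<Sum>l<?N. if l = j then Gam N1 k Ns kap t j else 0)"
      unfolding mvec_def v_def by (rule sum.cong) auto
    also have "\<dots> = Gam N1 k Ns kap t j" using jN by simp
    also have "\<dots> = gam_diag N1 k Ns kap i * v t" using Gam_col[OF jN t, where k=k and kap=kap] nc gj by (auto simp: v_def)
    finally show "mvec ?N (Gam N1 k Ns kap) v t = gam_diag N1 k Ns kap i * v t" .
  qed
  moreover have "\<exists>t<?N. v t \<noteq> 0" using jN by (auto simp: v_def)
  ultimately show ?thesis unfolding is_eigenvalue_def by blast
qed

lemma mmul_assoc: "mmul N (mmul N A B) C = mmul N A (mmul N B C)"
proof (intro ext)
  fix i j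
  have "mmul N (mmul N A B) C i j = (\<Sum>l<N. \<Sum>t<N. A i t * B t l * C l j)"
    unfolding mmul_def by (simp add: sum_distrib_right)
  also have "\<dots> = (\<Sum>t<N. \<Sum>l<N. A i t * B t l * C l j)" by (rule sum.swap)
  also have "\<dots> = mmul N A (mmul N B C) i j"
    unfolding mmul_def by (simp add: sum_distrib_left mult.assoc)
  finally show "mmul N (mmul N A B) C i j = mmul N A (mmul N B C) i j" .
qed

lemma mvec_mmul: "mvec N (mmul N A B) v i = mvec N A (mvec N B v) i"
proof -
  have "mvec N (mmul N A B) v i = (\<Sum>l<N. \<Sum>t<N. A i t * B t l * v l)"
    unfolding mmul_def mvec_def by (simp add: sum_distrib_right)
  also have "\<dots> = (\<Sum>t<N. \<Sum>l<N. A i t * B t l * v l)" by (rule sum.swap)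
  also have "\<dots> = mvec N A (mvec N B v) i"
    unfolding mvec_def by (simp add: sum_distrib_left mult.assoc)
  finally show ?thesis .
qed

lemma mvec_cong:
  "(\<And>l. l < N \<Longrightarrow> A i l = B i l) \<Longrightarrow> (\<And>l. l < N \<Longrightarrow> v l = w l) \<Longrightarrow>
   mvec N A v i = mvec N B w i"
  unfolding mvec_def by (rule sum.cong) auto

lemma mmul_cong:
  "(\<And>l. l < N \<Longrightarrow> A i l = A' i l) \<Longrightarrow> (\<And>l. l < N \<Longrightarrow> B l j = B' l j) \<Longrightarrow>
   mmul N A B i j = mmul N A' B' i j"
  unfolding mmul_def by (rule sum.cong) auto

lemma mmul_add_left: "mmul N A C i j + mmul N B C i j = mmul N (\<lambda>a b. A a b + B a b) C i j"
  unfolding mmul_def by (simp add: sum.distrib distrib_right)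

lemma mmul_add_right: "mmul N A B i j + mmul N A C i j = mmul N A (\<lambda>a b. B a b + C a b) i j"
  unfolding mmul_def by (simp add: sum.distrib distrib_left)

lemma mmul_rank_one_right: "mmul N A (\<lambda>a b. u a * w b) i j = mvec N A u i * w j"
  unfolding mmul_def mvec_def by (simp add: sum_distrib_right mult.assoc)

lemma mmul_rank_one_left: "mmul N (\<lambda>a b. u a * w b) B i j = u i * (\<Sum>l<N. w l * B l j)"
  unfolding mmul_def by (simp add: sum_distrib_left mult.assoc)

lemma mvec_shifted:
  assumes "i < N"
  shows "mvec N (\<lambda>i j. p * idm i j - G i j) v i = p * v i - mvec N G v i"
    "mvec N (\<lambda>i j. p * idm i j + G i j) v i = p * v i + mvec N G v i"
proof -
  have "mvec N (\<lambda>i j. p * idm i j - G i j) v i = (\<Sum>l<N. (if l = i then p * v i else 0) - G i l * v l)"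
    unfolding mvec_def by (rule sum.cong) (auto simp: idm_def algebra_simps)
  then show "mvec N (\<lambda>i j. p * idm i j - G i j) v i = p * v i - mvec N G v i"
    using assms by (simp add: sum_subtractf mvec_def)
  have "mvec N (\<lambda>i j. p * idm i j + G i j) v i = (\<Sum>l<N. (if l = i then p * v i else 0) + G i l * v l)"
    unfolding mvec_def by (rule sum.cong) (auto simp: idm_def algebra_simps)
  then show "mvec N (\<lambda>i j. p * idm i j + G i j) v i = p * v i + mvec N G v i"
    using assms by (simp add: sum.distrib mvec_def)
qed

lemma mmul_shifted:
  assumes "i < N" "j < N"
  shows "mmul N A (\<lambda>i j. p * idm i j - G i j) i j = p * A i j - mmul N A G i j"
    "mmul N (\<lambda>i j. p * idm i j - G i j) A i j = p * A i j - mmul N G A i j"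
    "mmul N A (\<lambda>i j. p * idm i j + G i j) i j = p * A i j + mmul N A G i j"
    "mmul N (\<lambda>i j. p * idm i j + G i j) A i j = p * A i j + mmul N G A i j"
proof -
  have "mmul N A (\<lambda>i j. p * idm i j - G i j) i j = (\<Sum>l<N. (if l = j then p * A i j else 0) - A i l * G l j)"
    unfolding mmul_def by (rule sum.cong) (auto simp: idm_def algebra_simps)
  then show "mmul N A (\<lambda>i j. p * idm i j - G i j) i j = p * A i j - mmul N A G i j"
    using assms by (simp add: sum_subtractf mmul_def)
  have "mmul N (\<lambda>i j. p * idm i j - G i j) A i j = (\<Sum>l<N. (if l = i then p * A i j else 0) - G i l * A l j)"
    unfolding mmul_def by (rule sum.cong) (auto simp: idm_def algebra_simps)
  then show "mmul N (\<lambda>i j. p * idm i j - G i j) A i j = p * A i j - mmul N G A i j"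
    using assms by (simp add: sum_subtractf mmul_def)
  have "mmul N A (\<lambda>i j. p * idm i j + G i j) i j = (\<Sum>l<N. (if l = j then p * A i j else 0) + A i l * G l j)"
    unfolding mmul_def by (rule sum.cong) (auto simp: idm_def algebra_simps)
  then show "mmul N A (\<lambda>i j. p * idm i j + G i j) i j = p * A i j + mmul N A G i j"
    using assms by (simp add: sum.distrib mmul_def)
  have "mmul N (\<lambda>i j. p * idm i j + G i j) A i j = (\<Sum>l<N. (if l = i then p * A i j else 0) + G i l * A l j)"
    unfolding mmul_def by (rule sum.cong) (auto simp: idm_def algebra_simps)
  then show "mmul N (\<lambda>i j. p * idm i j + G i j) A i j = p * A i j + mmul N G A i j"
    using assms by (simp add: sum.distrib mmul_def)
qed

lemma mvec_commute:
  assumes "\<And>i j. i < N \<Longrightarrow> j < N \<Longrightarrow> mmul N A B i j = mmul N B A i j" "i < N"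
  shows "mvec N B (mvec N A v) i = mvec N A (mvec N B v) i"
proof -
  have "mvec N B (mvec N A v) i = mvec N (mmul N B A) v i" by (simp add: mvec_mmul)
  also have "\<dots> = mvec N (mmul N A B) v i" by (rule mvec_cong) (use assms in auto)
  also have "\<dots> = mvec N A (mvec N B v) i" by (simp add: mvec_mmul)
  finally show ?thesis .
qed

(* A matrix A commuting with Gamma preserves a dispersion relation
   (aI - Gamma) r1 = (aI + Gamma) r0, since it then commutes with aI +- Gamma. *)
lemma commuting_dispersion:
  assumes C: "\<And>i j. i < N \<Longrightarrow> j < N \<Longrightarrow> mmul N A \<Gamma> i j = mmul N \<Gamma> A i j"
    and D: "\<And>i. i < N \<Longrightarrow>
      mvec N (\<lambda>i j. a * idm i j - \<Gamma> i j) r1 i = mvec N (\<lambda>i j. a * idm i j + \<Gamma> i j) r0 i"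
    and i: "i < N"
  shows "mvec N (\<lambda>i j. a * idm i j - \<Gamma> i j) (mvec N A r1) i
       = mvec N (\<lambda>i j. a * idm i j + \<Gamma> i j) (mvec N A r0) i"
proof -
  have C_minus: "\<And>i j. i < N \<Longrightarrow> j < N \<Longrightarrow>
      mmul N A (\<lambda>i j. a * idm i j - \<Gamma> i j) i j = mmul N (\<lambda>i j. a * idm i j - \<Gamma> i j) A i j"
    and C_plus: "\<And>i j. i < N \<Longrightarrow> j < N \<Longrightarrow>
      mmul N A (\<lambda>i j. a * idm i j + \<Gamma> i j) i j = mmul N (\<lambda>i j. a * idm i j + \<Gamma> i j) A i j"
    using C by (simp_all add: mmul_shifted)
  have "mvec N (\<lambda>i j. a * idm i j - \<Gamma> i j) (mvec N A r1) i
      = mvec N A (mvec N (\<lambda>i j. a * idm i j - \<Gamma> i j) r1) i"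
    by (rule mvec_commute[OF C_minus i])
  also have "\<dots> = mvec N A (mvec N (\<lambda>i j. a * idm i j + \<Gamma> i j) r0) i"
    by (rule mvec_cong) (use D in auto)
  also have "\<dots> = mvec N (\<lambda>i j. a * idm i j + \<Gamma> i j) (mvec N A r0) i"
    by (rule mvec_commute[OF C_plus i, symmetric])
  finally show ?thesis .
qed

lemma commuting_sylvester:
  assumes C: "\<And>i j. i < N \<Longrightarrow> j < N \<Longrightarrow> mmul N A \<Gamma> i j = mmul N \<Gamma> A i j"
    and S: "\<And>i j. i < N \<Longrightarrow> j < N \<Longrightarrow> mmul N M \<Gamma> i j + mmul N \<Gamma> M i j = r i * c j"
    and i: "i < N" and j: "j < N"
  shows "mmul N (mmul N A M) \<Gamma> i j + mmul N \<Gamma> (mmul N A M) i j = mvec N A r i * c j"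
proof -
  have "mmul N (mmul N A M) \<Gamma> i j + mmul N \<Gamma> (mmul N A M) i j
      = mmul N A (mmul N M \<Gamma>) i j + mmul N (mmul N \<Gamma> A) M i j"
    by (simp add: mmul_assoc)
  also have "mmul N (mmul N \<Gamma> A) M i j = mmul N (mmul N A \<Gamma>) M i j"
    by (rule mmul_cong) (use C i in auto)
  also have "\<dots> = mmul N A (mmul N \<Gamma> M) i j" by (simp add: mmul_assoc)
  also have "mmul N A (mmul N M \<Gamma>) i j + \<dots> = mmul N A (\<lambda>a b. mmul N M \<Gamma> a b + mmul N \<Gamma> M a b) i j"
    by (rule mmul_add_right)
  also have "\<dots> = mmul N A (\<lambda>a b. r a * c b) i j"
    by (rule mmul_cong) (use S j in auto)
  finally show ?thesis by (simp add: mmul_rank_one_right)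
qed

lemma sat_eqs_commuting_transform:
  assumes S: "sat_eqs N p q \<Gamma> c r M"
    and C: "\<And>i j. i < N \<Longrightarrow> j < N \<Longrightarrow> mmul N A \<Gamma> i j = mmul N \<Gamma> A i j"
  shows "sat_eqs N p q \<Gamma> c (\<lambda>n m. mvec N A (r n m)) (\<lambda>n m. mmul N A (M n m))"
  using S unfolding sat_eqs_def
  by (auto intro!: commuting_dispersion[OF C] commuting_sylvester[OF C])

lemma sylvester_product:
  assumes FC: "\<And>a b. a < N \<Longrightarrow> b < N \<Longrightarrow> mmul N F \<Gamma> a b = mmul N \<Gamma> F a b"
    and HC: "\<And>a b. a < N \<Longrightarrow> b < N \<Longrightarrow> mmul N H \<Gamma> a b = mmul N (\<lambda>a b. \<Gamma> b a) H a b"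
    and GC: "\<And>a b. a < N \<Longrightarrow> b < N \<Longrightarrow>
      mmul N \<Gamma> G a b + mmul N G (\<lambda>a b. \<Gamma> b a) a b = u a * w b"
    and i: "i < N" and j: "j < N"
  shows "mmul N (mmul N (mmul N F G) H) \<Gamma> i j + mmul N \<Gamma> (mmul N (mmul N F G) H) i j
       = mvec N F u i * (\<Sum>l<N. w l * H l j)"
proof -
  let ?T = "\<lambda>a b. \<Gamma> b a"
  have right: "mmul N (mmul N (mmul N F G) H) \<Gamma> i j = mmul N (mmul N F (mmul N G ?T)) H i j"
  proof -
    have "mmul N (mmul N (mmul N F G) H) \<Gamma> i j = mmul N (mmul N F G) (mmul N H \<Gamma>) i j"
      by (simp add: mmul_assoc)
    also have "\<dots> = mmul N (mmul N F G) (mmul N ?T H) i j" by (rule mmul_cong) (use HC j in auto)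
    finally show ?thesis by (simp add: mmul_assoc)
  qed
  have left: "mmul N \<Gamma> (mmul N (mmul N F G) H) i j = mmul N (mmul N F (mmul N \<Gamma> G)) H i j"
  proof -
    have "mmul N \<Gamma> (mmul N (mmul N F G) H) i j = mmul N (mmul N (mmul N \<Gamma> F) G) H i j"
      by (simp add: mmul_assoc)
    also have "\<dots> = mmul N (mmul N (mmul N F \<Gamma>) G) H i j"
      by (rule mmul_cong, rule mmul_cong) (use FC i in auto)
    finally show ?thesis by (simp add: mmul_assoc)
  qed
  have FGC: "mmul N F (mmul N G ?T) i l + mmul N F (mmul N \<Gamma> G) i l = mvec N F u i * w l"
    if l: "l < N" for l
  proof -
    have "mmul N F (mmul N G ?T) i l + mmul N F (mmul N \<Gamma> G) i l
        = mmul N F (\<lambda>a b. mmul N G ?T a b + mmul N \<Gamma> G a b) i l" by (rule mmul_add_right)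
    also have "\<dots> = mmul N F (\<lambda>a b. u a * w b) i l"
      by (rule mmul_cong) (use GC l in \<open>auto simp: add.commute\<close>)
    finally show ?thesis by (simp add: mmul_rank_one_right)
  qed
  have "mmul N (mmul N F (mmul N G ?T)) H i j + mmul N (mmul N F (mmul N \<Gamma> G)) H i j
      = mmul N (\<lambda>a b. mmul N F (mmul N G ?T) a b + mmul N F (mmul N \<Gamma> G) a b) H i j"
    by (rule mmul_add_left)
  also have "\<dots> = mmul N (\<lambda>a b. mvec N F u a * w b) H i j"
    by (rule mmul_cong) (use FGC in auto)
  finally show ?thesis unfolding right left by (simp add: mmul_rank_one_left)
qed

lemma cayley_power_step:
  fixes a z :: complex and n :: int
  assumes "z \<noteq> a" "z \<noteq> - a"
  shows "(a - z) * ((a + z) / (a - z)) powi (n + 1) = (a + z) * ((a + z) / (a - z)) powi n"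
proof -
  have "(a + z) / (a - z) \<noteq> 0" using assms by (auto simp: add_eq_0_iff)
  then have "((a + z) / (a - z)) powi (n + 1) = ((a + z) / (a - z)) powi n * ((a + z) / (a - z))"
    by (simp add: power_int_add_1)
  then show ?thesis using assms by simp
qed

lemma rho_step_n:
  assumes "z \<noteq> p" "z \<noteq> - p"
  shows "(p - z) * rho p q (n + 1) m r0 z = (p + z) * rho p q n m r0 z"
  using cayley_power_step[OF assms, of n] unfolding rho_def by (simp add: mult.assoc mult.left_commute)

lemma rho_step_m:
  assumes "z \<noteq> q" "z \<noteq> - q"
  shows "(q - z) * rho p q n (m + 1) r0 z = (q + z) * rho p q n m r0 z"
  using cayley_power_step[OF assms, of m] unfolding rho_def by (simp add: mult.assoc mult.left_commute)

lemma rho_analytic: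
  assumes "z \<notin> {p, - p, q, - q}"
  shows "rho p q n m r0 analytic_on {z}"
proof -
  have "p - z \<noteq> 0" "p + z \<noteq> 0" "q - z \<noteq> 0" "q + z \<noteq> 0"
    using assms by (auto simp: add_eq_0_iff)
  then show ?thesis unfolding rho_def by (auto intro!: analytic_intros)
qed

(* Comparing Taylor coefficients at kappa in (a - z) f1(z) = (a + z) f0(z): the coefficients
   t_j = f^(j)(kappa)/j! satisfy (a - kappa) t1_j - t1_(j-1) = (a + kappa) t0_j + t0_(j-1). *)
lemma taylor_shift:
  fixes f1 f0 :: "complex \<Rightarrow> complex" and a \<kappa> :: complex
  assumes f1: "f1 analytic_on {\<kappa>}" and f0: "f0 analytic_on {\<kappa>}"
    and rel: "eventually (\<lambda>z. (a - z) * f1 z = (a + z) * f0 z) (nhds \<kappa>)"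
  shows "(a - \<kappa>) * (dk j f1 \<kappa> / fact j) - (if 1 \<le> j then dk (j - 1) f1 \<kappa> / fact (j - 1) else 0)
       = (a + \<kappa>) * (dk j f0 \<kappa> / fact j) + (if 1 \<le> j then dk (j - 1) f0 \<kappa> / fact (j - 1) else 0)"
proof -
  let ?E1 = "fps_expansion f1 \<kappa>" and ?E0 = "fps_expansion f0 \<kappa>"
  have A1: "(\<lambda>w. ((a - \<kappa>) - w) * f1 (\<kappa> + w)) has_fps_expansion (fps_const (a - \<kappa>) - fps_X) * ?E1"
    by (intro fps_expansion_intros analytic_at_imp_has_fps_expansion f1)
  have A0: "(\<lambda>w. ((a + \<kappa>) + w) * f0 (\<kappa> + w)) has_fps_expansion (fps_const (a + \<kappa>) + fps_X) * ?E0"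
    by (intro fps_expansion_intros analytic_at_imp_has_fps_expansion f0)
  have "eventually (\<lambda>w. ((a - \<kappa>) - w) * f1 (\<kappa> + w) = ((a + \<kappa>) + w) * f0 (\<kappa> + w)) (nhds 0)"
    using rel by (auto simp: nhds_to_0' eventually_filtermap algebra_simps)
  then have "(\<lambda>w. ((a + \<kappa>) + w) * f0 (\<kappa> + w)) has_fps_expansion (fps_const (a - \<kappa>) - fps_X) * ?E1"
    using A1 by (subst (asm) has_fps_expansion_cong) auto
  then have "(fps_const (a - \<kappa>) - fps_X) * ?E1 = (fps_const (a + \<kappa>) + fps_X) * ?E0"
    using A0 by (rule fps_expansion_unique_complex)
  then have "fps_nth ((fps_const (a - \<kappa>) - fps_X) * ?E1) j = fps_nth ((fps_const (a + \<kappa>) + fps_X) * ?E0) j"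
    by simp
  then show ?thesis
    by (cases j) (simp_all add: fps_expansion_def dk_def algebra_simps)
qed

(* Step (1): a row-wise dispersion relation for r.  The hypothesis step abstracts the
   shift (p with n -> n + 1, or q with m -> m + 1). *)
lemma rvec_dispersion:
  fixes a p q :: complex and n1 m1 n0 m0 :: int
  assumes i: "i < sum_list (N1#Ns)"
    and avoid: "gam_diag N1 k Ns kap i \<notin> {p, - p, q, - q, a, - a}"
    and step: "\<And>r0 z. z \<noteq> a \<Longrightarrow> z \<noteq> - a \<Longrightarrow>
      (a - z) * rho p q n1 m1 r0 z = (a + z) * rho p q n0 m0 r0 z"
  shows "mvec (sum_list (N1#Ns)) (\<lambda>i j. a * idm i j - Gam N1 k Ns kap i j) (rvec p q N1 k r0D Ns kap r0J n1 m1) i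
       = mvec (sum_list (N1#Ns)) (\<lambda>i j. a * idm i j + Gam N1 k Ns kap i j) (rvec p q N1 k r0D Ns kap r0J n0 m0) i"
proof -
  let ?L = "N1#Ns" and ?lam = "gam_diag N1 k Ns kap i"
  let ?r1 = "rvec p q N1 k r0D Ns kap r0J n1 m1" and ?r0 = "rvec p q N1 k r0D Ns kap r0J n0 m0"
  have row: "(a - ?lam) * ?r1 i - (if jordan_pred ?L i then ?r1 (i - 1) else 0)
           = (a + ?lam) * ?r0 i + (if jordan_pred ?L i then ?r0 (i - 1) else 0)"
  proof (cases "blk ?L i = 0")
    case True
    then show ?thesis using avoid step by (simp add: rvec_def gam_diag_def Let_def)
  next
    case False
    define b where "b = blk ?L i"
    define f1 f0 where "f1 = rho p q n1 m1 (r0J b)" and "f0 = rho p q n0 m0 (r0J b)"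
    have kap: "kap b \<notin> {p, - p, q, - q, a, - a}" using avoid False by (simp add: gam_diag_def b_def)
    have "eventually (\<lambda>z. z \<noteq> a \<and> z \<noteq> - a) (nhds (kap b))"
      using kap by (intro eventually_conj t1_space_nhds) auto
    then have rel: "eventually (\<lambda>z. (a - z) * f1 z = (a + z) * f0 z) (nhds (kap b))"
      by eventually_elim (simp add: f1_def f0_def step)
    have entries: "?r1 i = dk (loc ?L i) f1 (kap b) / fact (loc ?L i)"
        "?r0 i = dk (loc ?L i) f0 (kap b) / fact (loc ?L i)"
        "1 \<le> loc ?L i \<Longrightarrow> ?r1 (i - 1) = dk (loc ?L i - 1) f1 (kap b) / fact (loc ?L i - 1)"
        "1 \<le> loc ?L i \<Longrightarrow> ?r0 (i - 1) = dk (loc ?L i - 1) f0 (kap b) / fact (loc ?L i - 1)"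
      using False prev_in_block[OF i] by (simp_all add: rvec_def Let_def f1_def f0_def b_def)
    have "?lam = kap b" using False by (simp add: gam_diag_def b_def)
    have "f1 analytic_on {kap b}" "f0 analytic_on {kap b}"
      using kap unfolding f1_def f0_def by (auto intro: rho_analytic)
    from taylor_shift[OF this rel, of "loc ?L i"]
    show ?thesis using \<open>?lam = kap b\<close> False entries by (cases "1 \<le> loc ?L i") simp_all
  qed
  show ?thesis
    unfolding mvec_shifted[OF i] unfolding mvec_def Gam_times_vec[OF i] using row by (simp add: algebra_simps)
qed

definition block_toeplitz ::
    "nat \<Rightarrow> nat list \<Rightarrow> (nat \<Rightarrow> complex) \<Rightarrow> (nat \<Rightarrow> nat \<Rightarrow> complex) \<Rightarrow> nat \<Rightarrow> nat \<Rightarrow> complex" where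
  "block_toeplitz N1 Ns dg ts i j =
    (let L = N1 # Ns; bi = blk L i; bj = blk L j; a = loc L i; b = loc L j in
     if bi \<noteq> bj then 0
     else if bi = 0 then (if a = b then dg a else 0)
     else if b \<le> a then ts bi (a - b) else 0)"

lemma Amat_block_toeplitz: "Amat N1 Ns aseq = block_toeplitz N1 Ns (\<lambda>_. 1) aseq"
  by (intro ext) (simp add: Amat_def block_toeplitz_def)

lemma Fmat_block_toeplitz:
  "Fmat p q N1 k r0D Ns kap r0J n m
     = block_toeplitz N1 Ns (\<lambda>a. rho p q n m (r0D a) (k a)) (\<lambda>b d. dk d (rho p q n m (r0J b)) (kap b) / fact d)"
  by (intro ext) (simp add: Fmat_def block_toeplitz_def)

(* Block lower triangular Toeplitz matrices commute with Gamma: on a Jordan block Gamma is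
   kappa I plus the lower shift, and Toeplitz matrices commute with the shift. *)
lemma block_toeplitz_commute:
  assumes i: "i < sum_list (N1#Ns)" and j: "j < sum_list (N1#Ns)"
  shows "mmul (sum_list (N1#Ns)) (block_toeplitz N1 Ns dg ts) (Gam N1 k Ns kap) i j
       = mmul (sum_list (N1#Ns)) (Gam N1 k Ns kap) (block_toeplitz N1 Ns dg ts) i j"
proof -
  let ?L = "N1#Ns" and ?N = "sum_list (N1#Ns)"
  let ?T = "block_toeplitz N1 Ns dg ts" and ?G = "Gam N1 k Ns kap"
  have l: "mmul ?N ?T ?G i j = (\<Sum>l<?N. ?G l j * ?T i l)" unfolding mmul_def by (simp add: mult.commute)
  have r: "mmul ?N ?G ?T i j = (\<Sum>l<?N. ?G i l * ?T l j)" unfolding mmul_def by simp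
  have ci: "1 \<le> loc ?L i \<Longrightarrow> blk ?L (i - 1) = blk ?L i \<and> loc ?L (i - 1) = loc ?L i - 1"
    using prev_in_block[OF i] by blast
  have cj: "loc ?L j + 1 < ?L ! blk ?L j \<Longrightarrow> blk ?L (j + 1) = blk ?L j \<and> loc ?L (j + 1) = loc ?L j + 1"
    using next_in_block[OF j] by blast
  have ai: "loc ?L i < ?L ! blk ?L i" using index_decomp[OF i] by blast
  have "gam_diag N1 k Ns kap j * ?T i j + (if jordan_succ ?L j then ?T i (j + 1) else 0)
     = gam_diag N1 k Ns kap i * ?T i j + (if jordan_pred ?L i then ?T (i - 1) j else 0)"
  proof (cases "blk ?L i = blk ?L j")
    case False
    then show ?thesis using ci cj by (auto simp: block_toeplitz_def Let_def)
  next
    case True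
    show ?thesis
    proof (cases "blk ?L i = 0")
      case True
      then show ?thesis using \<open>blk ?L i = blk ?L j\<close> by (auto simp: block_toeplitz_def Let_def gam_diag_def)
    next
      case False
      have e: "(loc ?L j + 1 < ?L ! blk ?L j \<and> loc ?L j + 1 \<le> loc ?L i)
          \<longleftrightarrow> (1 \<le> loc ?L i \<and> loc ?L j \<le> loc ?L i - 1)"
        using ai \<open>blk ?L i = blk ?L j\<close> by auto
      have e2: "loc ?L i - (loc ?L j + 1) = loc ?L i - 1 - loc ?L j" by simp
      show ?thesis using False \<open>blk ?L i = blk ?L j\<close> ci cj e e2
        by (auto simp: block_toeplitz_def Let_def gam_diag_def)
    qed
  qed
  then show ?thesis unfolding l r vec_times_Gam[OF j] Gam_times_vec[OF i] by (simp add: mult.commute)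
qed

(* H is block Hankel (its entries on a Jordan block depend on a + b only), which makes
   it intertwine Gamma with its transpose: H Gamma = Gamma^T H. *)
lemma Hmat_intertwine:
  assumes i: "i < sum_list (N1#Ns)" and j: "j < sum_list (N1#Ns)"
  shows "mmul (sum_list (N1#Ns)) (Hmat N1 Ns c) (Gam N1 k Ns kap) i j
       = mmul (sum_list (N1#Ns)) (\<lambda>i j. Gam N1 k Ns kap j i) (Hmat N1 Ns c) i j"
proof -
  let ?L = "N1#Ns" and ?N = "sum_list (N1#Ns)"
  let ?T = "Hmat N1 Ns c" and ?G = "Gam N1 k Ns kap"
  have l: "mmul ?N ?T ?G i j = (\<Sum>l<?N. ?G l j * ?T i l)" unfolding mmul_def by (simp add: mult.commute)
  have r: "mmul ?N (\<lambda>i j. ?G j i) ?T i j = (\<Sum>l<?N. ?G l i * ?T l j)" unfolding mmul_def by simp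
  have ci: "loc ?L i + 1 < ?L ! blk ?L i \<Longrightarrow> blk ?L (i + 1) = blk ?L i \<and> loc ?L (i + 1) = loc ?L i + 1"
    using next_in_block[OF i] by blast
  have cj: "loc ?L j + 1 < ?L ! blk ?L j \<Longrightarrow> blk ?L (j + 1) = blk ?L j \<and> loc ?L (j + 1) = loc ?L j + 1"
    using next_in_block[OF j] by blast
  have "gam_diag N1 k Ns kap j * ?T i j + (if jordan_succ ?L j then ?T i (j + 1) else 0)
     = gam_diag N1 k Ns kap i * ?T i j + (if jordan_succ ?L i then ?T (i + 1) j else 0)"
  proof (cases "blk ?L i = blk ?L j")
    case False
    then show ?thesis using ci cj by (auto simp: Hmat_def Let_def)
  next
    case True
    show ?thesis
    proof (cases "blk ?L i = 0")
      case True
      then show ?thesis using \<open>blk ?L i = blk ?L j\<close> by (auto simp: Hmat_def Let_def gam_diag_def)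
    next
      case False
      have e: "loc ?L i + loc ?L j + 1 < ?L ! blk ?L i
          \<Longrightarrow> loc ?L j + 1 < ?L ! blk ?L j \<and> loc ?L i + 1 < ?L ! blk ?L i"
        using \<open>blk ?L i = blk ?L j\<close> by auto
      show ?thesis using False \<open>blk ?L i = blk ?L j\<close> ci cj e
        by (auto simp: Hmat_def Let_def gam_diag_def)
    qed
  qed
  then show ?thesis unfolding l r vec_times_Gam[OF j] vec_times_Gam[OF i] by (simp add: mult.commute)
qed

definition evec :: "nat \<Rightarrow> nat list \<Rightarrow> nat \<Rightarrow> complex" where
  "evec N1 Ns i = (if blk (N1#Ns) i = 0 \<or> loc (N1#Ns) i = 0 then 1 else 0)"

lemma sum_evec_block:
  assumes i: "i < sum_list (N1#Ns)"
    and other_blocks: "\<And>t. t < sum_list (N1#Ns) \<Longrightarrow> blk (N1#Ns) t \<noteq> blk (N1#Ns) i \<Longrightarrow> h t = 0"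
    and diag_block: "\<And>t. t < sum_list (N1#Ns) \<Longrightarrow> blk (N1#Ns) i = 0 \<Longrightarrow> t \<noteq> i \<Longrightarrow> h t = 0"
  shows "(\<Sum>t<sum_list (N1#Ns). evec N1 Ns t * h t)
       = h (if blk (N1#Ns) i = 0 then i else off (N1#Ns) (blk (N1#Ns) i))"
proof -
  let ?L = "N1#Ns" and ?N = "sum_list (N1#Ns)"
  define t0 where "t0 = (if blk ?L i = 0 then i else off ?L (blk ?L i))"
  have t0: "t0 < ?N" "blk ?L t0 = blk ?L i" using block_start[OF i] i by (auto simp: t0_def)
  have pointwise: "evec N1 Ns t * h t = (if t = t0 then h t0 else 0)" if t: "t < ?N" for t
  proof (cases "blk ?L t = blk ?L i")
    case False
    then show ?thesis using t0 other_blocks[OF t] by auto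
  next
    case True
    have "t = off ?L (blk ?L t) + loc ?L t" using index_decomp[OF t] by blast
    then have "blk ?L i \<noteq> 0 \<Longrightarrow> t = t0 \<longleftrightarrow> loc ?L t = 0" using True t0_def by auto
    then show ?thesis using True diag_block[OF t] by (auto simp: evec_def t0_def)
  qed
  have "(\<Sum>t<?N. evec N1 Ns t * h t) = (\<Sum>t<?N. if t = t0 then h t0 else 0)"
    by (rule sum.cong) (auto simp: pointwise)
  then show ?thesis using t0 by (simp add: t0_def)
qed

(* F e = r: the first column of each Toeplitz block of F carries the entries of r. *)
lemma block_toeplitz_evec:
  assumes i: "i < sum_list (N1#Ns)"
  shows "mvec (sum_list (N1#Ns)) (block_toeplitz N1 Ns dg ts) (evec N1 Ns) i
     = (if blk (N1#Ns) i = 0 then dg (loc (N1#Ns) i) else ts (blk (N1#Ns) i) (loc (N1#Ns) i))"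
  unfolding mvec_def mult.commute[of "block_toeplitz N1 Ns dg ts i _"]
  using block_start[OF i] same_block_index[OF _ i]
  by (subst sum_evec_block[OF i]) (auto simp: block_toeplitz_def Let_def)

(* e^T H = c: the first row of each Hankel block of H carries the entries of c. *)
lemma evec_Hmat:
  assumes j: "j < sum_list (N1#Ns)"
  shows "(\<Sum>l<sum_list (N1#Ns). evec N1 Ns l * Hmat N1 Ns c l j) = c j"
proof -
  let ?L = "N1#Ns"
  have "(\<Sum>l<sum_list ?L. evec N1 Ns l * Hmat N1 Ns c l j)
      = Hmat N1 Ns c (if blk ?L j = 0 then j else off ?L (blk ?L j)) j"
    using same_block_index[OF _ j] by (intro sum_evec_block[OF j]) (auto simp: Hmat_def Let_def)
  also have "\<dots> = c j"
    using block_start[OF j] index_decomp[OF j] by (auto simp: Hmat_def Let_def)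
  finally show ?thesis .
qed

(* The matrix G.  Its Jordan-Jordan blocks have the entries of the expansion of
   1/(s + x + y) in x, y, with s = kappa_i + kappa_j. *)
definition pascal_entry :: "complex \<Rightarrow> nat \<Rightarrow> nat \<Rightarrow> complex" where
  "pascal_entry s a b = of_nat ((a + b) choose a) * (- 1) ^ (a + b) / s ^ (a + b + 1)"

lemma Gmat_jordan_jordan:
  "blk (N1#Ns) i \<noteq> 0 \<Longrightarrow> blk (N1#Ns) j \<noteq> 0 \<Longrightarrow>
   Gmat N1 k Ns kap i j = pascal_entry (kap (blk (N1#Ns) i) + kap (blk (N1#Ns) j)) (loc (N1#Ns) i) (loc (N1#Ns) j)"
  by (simp add: Gmat_def pascal_entry_def Let_def)

(* Pascal's rule turns into the recurrence s g(a,b) + g(a-1,b) + g(a,b-1) = [a = b = 0]. *)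
lemma pascal_recurrence:
  fixes s :: complex
  assumes "s \<noteq> 0"
  shows "s * pascal_entry s a b + (if 1 \<le> a then pascal_entry s (a - 1) b else 0)
         + (if 1 \<le> b then pascal_entry s a (b - 1) else 0)
       = (if a = 0 \<and> b = 0 then 1 else 0)"
proof -
  have sg: "s * pascal_entry s a b = of_nat ((a + b) choose a) * (- 1) ^ (a + b) / s ^ (a + b)"
    using assms(1) unfolding pascal_entry_def by (simp add: field_simps)
  show ?thesis
  proof (cases a)
    case 0
    show ?thesis
    proof (cases b)
      case 0 then show ?thesis using \<open>a = 0\<close> sg by simp
    next
      case (Suc b')
      have "pascal_entry s 0 b' = (- 1) ^ b' / s ^ b" using Suc unfolding pascal_entry_def by simp
      then show ?thesis using sg 0 Suc by (simp add: field_simps)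
    qed
  next
    case (Suc a')
    show ?thesis
    proof (cases b)
      case 0
      have "pascal_entry s a' 0 = (- 1) ^ a' / s ^ a" using Suc unfolding pascal_entry_def by simp
      then show ?thesis using sg 0 Suc by (simp add: field_simps)
    next
      case (Suc b')
      have pas: "(a + b) choose a = ((a' + b) choose a') + ((a + b') choose a)"
        using \<open>a = Suc a'\<close> Suc by simp
      have g1: "pascal_entry s a' b = of_nat ((a' + b) choose a') * (- 1) ^ (a' + b) / s ^ (a + b)"
        using \<open>a = Suc a'\<close> unfolding pascal_entry_def by simp
      have g2: "pascal_entry s a b' = of_nat ((a + b') choose a) * (- 1) ^ (a + b') / s ^ (a + b)"
        using Suc unfolding pascal_entry_def by simp
      have m: "(- 1 :: complex) ^ (a + b) = - ((- 1) ^ (a' + b))" "(- 1 :: complex) ^ (a + b) = - ((- 1) ^ (a + b'))"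
        using \<open>a = Suc a'\<close> Suc by simp_all
      have "s * pascal_entry s a b + pascal_entry s a' b + pascal_entry s a b' = 0"
        unfolding sg g1 g2 pas of_nat_add using m assms(1) by (simp add: field_simps)
      then show ?thesis using \<open>a = Suc a'\<close> Suc by simp
    qed
  qed
qed

(* The one-sided analogue for the diagonal-Jordan blocks, g(b) = -(-1/s)^(b+1). *)
lemma power_recurrence:
  fixes s :: complex
  assumes "s \<noteq> 0"
  shows "s * (- ((- 1 / s) ^ (b + 1))) + (if 1 \<le> b then - ((- 1 / s) ^ b) else 0) = (if b = 0 then 1 else 0)"
proof -
  have "s * (- ((- 1 / s) ^ (b + 1))) = (- 1 / s) ^ b" using assms by simp
  then show ?thesis by auto
qed

(* By the action of Gamma, the (i,j) entry of Gamma G + G Gamma^T is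
   (lambda_i + lambda_j) G_ij + G_(i-1)j + G_i(j-1), the last two terms present only inside
   Jordan blocks. *)
lemma Gmat_recurrence_diag_row:
  assumes j: "j < sum_list (N1#Ns)" and bi: "blk (N1#Ns) i = 0"
    and s: "gam_diag N1 k Ns kap i + gam_diag N1 k Ns kap j \<noteq> 0"
  shows "(gam_diag N1 k Ns kap i + gam_diag N1 k Ns kap j) * Gmat N1 k Ns kap i j
       + (if jordan_pred (N1#Ns) i then Gmat N1 k Ns kap (i - 1) j else 0)
       + (if jordan_pred (N1#Ns) j then Gmat N1 k Ns kap i (j - 1) else 0)
       = evec N1 Ns i * evec N1 Ns j"
proof (cases "blk (N1#Ns) j = 0")
  case True
  then show ?thesis using bi s by (simp add: Gmat_def Let_def gam_diag_def evec_def)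
next
  case False
  let ?L = "N1#Ns"
  define t where "t = k (loc ?L i) + kap (blk ?L j)"
  have "t \<noteq> 0" using s bi False by (simp add: gam_diag_def t_def)
  then have D: "t * (- ((- 1 / t) ^ (loc ?L j + 1))) + (if 1 \<le> loc ?L j then - ((- 1 / t) ^ (loc ?L j)) else 0)
      = (if loc ?L j = 0 then 1 else 0)"
    by (rule power_recurrence)
  have "gam_diag N1 k Ns kap i + gam_diag N1 k Ns kap j = t" using bi False by (simp add: gam_diag_def t_def)
  moreover have "Gmat N1 k Ns kap i j = - ((- 1 / t) ^ (loc ?L j + 1))"
    using bi False by (simp add: Gmat_def Let_def t_def)
  moreover have "(if jordan_pred ?L j then Gmat N1 k Ns kap i (j - 1) else 0)
      = (if 1 \<le> loc ?L j then - ((- 1 / t) ^ (loc ?L j)) else 0)"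
    using bi False prev_in_block[OF j] by (auto simp: Gmat_def Let_def t_def)
  moreover have "evec N1 Ns i * evec N1 Ns j = (if loc ?L j = 0 then 1 else 0)"
    using bi False by (simp add: evec_def)
  ultimately show ?thesis using bi D by simp
qed

lemma Gmat_recurrence_jordan_diag:
  assumes i: "i < sum_list (N1#Ns)" and bi: "blk (N1#Ns) i \<noteq> 0" and bj: "blk (N1#Ns) j = 0"
    and s: "gam_diag N1 k Ns kap i + gam_diag N1 k Ns kap j \<noteq> 0"
  shows "(gam_diag N1 k Ns kap i + gam_diag N1 k Ns kap j) * Gmat N1 k Ns kap i j
       + (if jordan_pred (N1#Ns) i then Gmat N1 k Ns kap (i - 1) j else 0)
       + (if jordan_pred (N1#Ns) j then Gmat N1 k Ns kap i (j - 1) else 0)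
       = evec N1 Ns i * evec N1 Ns j"
proof -
  let ?L = "N1#Ns"
  define t where "t = k (loc ?L j) + kap (blk ?L i)"
  have "t \<noteq> 0" using s bi bj by (simp add: gam_diag_def t_def add.commute)
  then have D: "t * (- ((- 1 / t) ^ (loc ?L i + 1))) + (if 1 \<le> loc ?L i then - ((- 1 / t) ^ (loc ?L i)) else 0)
      = (if loc ?L i = 0 then 1 else 0)"
    by (rule power_recurrence)
  have "gam_diag N1 k Ns kap i + gam_diag N1 k Ns kap j = t"
    using bi bj by (simp add: gam_diag_def t_def add.commute)
  moreover have "Gmat N1 k Ns kap i j = - ((- 1 / t) ^ (loc ?L i + 1))"
    using bi bj by (simp add: Gmat_def Let_def t_def)
  moreover have "(if jordan_pred ?L i then Gmat N1 k Ns kap (i - 1) j else 0)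
      = (if 1 \<le> loc ?L i then - ((- 1 / t) ^ (loc ?L i)) else 0)"
    using bi bj prev_in_block[OF i] by (auto simp: Gmat_def Let_def t_def)
  moreover have "evec N1 Ns i * evec N1 Ns j = (if loc ?L i = 0 then 1 else 0)"
    using bi bj by (simp add: evec_def)
  ultimately show ?thesis using bj D by simp
qed

lemma Gmat_recurrence_jordan_jordan:
  assumes i: "i < sum_list (N1#Ns)" and j: "j < sum_list (N1#Ns)"
    and bi: "blk (N1#Ns) i \<noteq> 0" and bj: "blk (N1#Ns) j \<noteq> 0"
    and s: "gam_diag N1 k Ns kap i + gam_diag N1 k Ns kap j \<noteq> 0"
  shows "(gam_diag N1 k Ns kap i + gam_diag N1 k Ns kap j) * Gmat N1 k Ns kap i j
       + (if jordan_pred (N1#Ns) i then Gmat N1 k Ns kap (i - 1) j else 0)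
       + (if jordan_pred (N1#Ns) j then Gmat N1 k Ns kap i (j - 1) else 0)
       = evec N1 Ns i * evec N1 Ns j"
proof -
  let ?L = "N1#Ns"
  define t where "t = kap (blk ?L i) + kap (blk ?L j)"
  have "t \<noteq> 0" using s bi bj by (simp add: gam_diag_def t_def)
  then have D: "t * pascal_entry t (loc ?L i) (loc ?L j)
      + (if 1 \<le> loc ?L i then pascal_entry t (loc ?L i - 1) (loc ?L j) else 0)
      + (if 1 \<le> loc ?L j then pascal_entry t (loc ?L i) (loc ?L j - 1) else 0)
      = (if loc ?L i = 0 \<and> loc ?L j = 0 then 1 else 0)"
    by (rule pascal_recurrence)
  have "gam_diag N1 k Ns kap i + gam_diag N1 k Ns kap j = t" using bi bj by (simp add: gam_diag_def t_def)
  moreover have "Gmat N1 k Ns kap i j = pascal_entry t (loc ?L i) (loc ?L j)"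
    using bi bj by (simp add: Gmat_jordan_jordan t_def)
  moreover have "(if jordan_pred ?L i then Gmat N1 k Ns kap (i - 1) j else 0)
      = (if 1 \<le> loc ?L i then pascal_entry t (loc ?L i - 1) (loc ?L j) else 0)"
    using bi bj prev_in_block[OF i] by (cases "1 \<le> loc ?L i") (simp_all add: Gmat_jordan_jordan t_def)
  moreover have "(if jordan_pred ?L j then Gmat N1 k Ns kap i (j - 1) else 0)
      = (if 1 \<le> loc ?L j then pascal_entry t (loc ?L i) (loc ?L j - 1) else 0)"
    using bi bj prev_in_block[OF j] by (cases "1 \<le> loc ?L j") (simp_all add: Gmat_jordan_jordan t_def)
  moreover have "evec N1 Ns i * evec N1 Ns j = (if loc ?L i = 0 \<and> loc ?L j = 0 then 1 else 0)"
    using bi bj by (simp add: evec_def)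
  ultimately show ?thesis using bi D by simp
qed

lemma Gmat_lyapunov:
  assumes i: "i < sum_list (N1#Ns)" and j: "j < sum_list (N1#Ns)"
    and s: "gam_diag N1 k Ns kap i + gam_diag N1 k Ns kap j \<noteq> 0"
  shows "mmul (sum_list (N1#Ns)) (Gam N1 k Ns kap) (Gmat N1 k Ns kap) i j
       + mmul (sum_list (N1#Ns)) (Gmat N1 k Ns kap) (\<lambda>i j. Gam N1 k Ns kap j i) i j
       = evec N1 Ns i * evec N1 Ns j"
proof -
  let ?N = "sum_list (N1#Ns)" and ?G = "Gmat N1 k Ns kap" and ?\<Gamma> = "Gam N1 k Ns kap"
  have "mmul ?N ?\<Gamma> ?G i j = (\<Sum>l<?N. ?\<Gamma> i l * ?G l j)" unfolding mmul_def by simp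
  moreover have "mmul ?N ?G (\<lambda>i j. ?\<Gamma> j i) i j = (\<Sum>l<?N. ?\<Gamma> j l * ?G i l)"
    unfolding mmul_def by (simp add: mult.commute)
  moreover have "(gam_diag N1 k Ns kap i + gam_diag N1 k Ns kap j) * ?G i j
       + (if jordan_pred (N1#Ns) i then ?G (i - 1) j else 0)
       + (if jordan_pred (N1#Ns) j then ?G i (j - 1) else 0)
       = evec N1 Ns i * evec N1 Ns j"
    using Gmat_recurrence_diag_row[OF j _ s] Gmat_recurrence_jordan_diag[OF i _ _ s]
      Gmat_recurrence_jordan_jordan[OF i j _ _ s] by blast
  ultimately show ?thesis unfolding Gam_times_vec[OF i] Gam_times_vec[OF j] by (simp add: algebra_simps)
qed

lemma Mmat_sylvester:
  fixes N1 :: nat and Ns :: "nat list" and k kap :: "nat \<Rightarrow> complex"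
  defines "N \<equiv> sum_list (N1 # Ns)" and "\<Gamma> \<equiv> Gam N1 k Ns kap"
  assumes nz: "\<And>a b. a < N \<Longrightarrow> b < N \<Longrightarrow> gam_diag N1 k Ns kap a + gam_diag N1 k Ns kap b \<noteq> 0"
    and i: "i < N" and j: "j < N"
  shows "mmul N (Mmat p q N1 k r0D Ns kap r0J c n m) \<Gamma> i j + mmul N \<Gamma> (Mmat p q N1 k r0D Ns kap r0J c n m) i j
       = rvec p q N1 k r0D Ns kap r0J n m i * c j"
proof -
  let ?F = "Fmat p q N1 k r0D Ns kap r0J n m"
  have "Mmat p q N1 k r0D Ns kap r0J c n m = mmul N (mmul N ?F (Gmat N1 k Ns kap)) (Hmat N1 Ns c)"
    by (simp add: Mmat_def N_def Let_def)
  moreover have "mmul N (mmul N (mmul N ?F (Gmat N1 k Ns kap)) (Hmat N1 Ns c)) \<Gamma> i j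
      + mmul N \<Gamma> (mmul N (mmul N ?F (Gmat N1 k Ns kap)) (Hmat N1 Ns c)) i j
      = mvec N ?F (evec N1 Ns) i * (\<Sum>l<N. evec N1 Ns l * Hmat N1 Ns c l j)"
  proof (rule sylvester_product[OF _ _ _ i j])
    show "mmul N ?F \<Gamma> a b = mmul N \<Gamma> ?F a b" if "a < N" "b < N" for a b
      using that unfolding Fmat_block_toeplitz N_def \<Gamma>_def by (rule block_toeplitz_commute)
    show "mmul N (Hmat N1 Ns c) \<Gamma> a b = mmul N (\<lambda>a b. \<Gamma> b a) (Hmat N1 Ns c) a b" if "a < N" "b < N" for a b
      using that unfolding N_def \<Gamma>_def by (rule Hmat_intertwine)
    show "mmul N \<Gamma> (Gmat N1 k Ns kap) a b + mmul N (Gmat N1 k Ns kap) (\<lambda>a b. \<Gamma> b a) a b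
        = evec N1 Ns a * evec N1 Ns b" if "a < N" "b < N" for a b
      using that nz[OF that] unfolding N_def \<Gamma>_def by (rule Gmat_lyapunov)
  qed
  moreover have "mvec N ?F (evec N1 Ns) i = rvec p q N1 k r0D Ns kap r0J n m i"
    using block_toeplitz_evec[OF i[unfolded N_def]]
    unfolding Fmat_block_toeplitz N_def by (simp add: rvec_def Let_def)
  moreover have "(\<Sum>l<N. evec N1 Ns l * Hmat N1 Ns c l j) = c j"
    using j unfolding N_def by (rule evec_Hmat)
  ultimately show ?thesis by simp
qed

lemma rvec_Mmat_solution:
  fixes N1 :: nat and Ns :: "nat list" and k kap :: "nat \<Rightarrow> complex"
  defines "N \<equiv> sum_list (N1 # Ns)" and "\<Gamma> \<equiv> Gam N1 k Ns kap"
  assumes nz: "\<And>a b. a < N \<Longrightarrow> b < N \<Longrightarrow> gam_diag N1 k Ns kap a + gam_diag N1 k Ns kap b \<noteq> 0"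
    and avoid: "\<And>i. i < N \<Longrightarrow> gam_diag N1 k Ns kap i \<notin> {p, - p, q, - q}"
  shows "sat_eqs N p q \<Gamma> c (rvec p q N1 k r0D Ns kap r0J) (Mmat p q N1 k r0D Ns kap r0J c)"
  unfolding sat_eqs_def
proof (intro allI conjI impI)
  fix n m i assume "i < N"
  then have i: "i < sum_list (N1 # Ns)" unfolding N_def .
  have avoid_p: "gam_diag N1 k Ns kap i \<notin> {p, - p, q, - q, p, - p}"
    and avoid_q: "gam_diag N1 k Ns kap i \<notin> {p, - p, q, - q, q, - q}"
    using avoid \<open>i < N\<close> by auto
  show "mvec N (\<lambda>i j. p * idm i j - \<Gamma> i j) (rvec p q N1 k r0D Ns kap r0J (n + 1) m) i
      = mvec N (\<lambda>i j. p * idm i j + \<Gamma> i j) (rvec p q N1 k r0D Ns kap r0J n m) i"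
    unfolding N_def \<Gamma>_def using i avoid_p rho_step_n by (rule rvec_dispersion)
  show "mvec N (\<lambda>i j. q * idm i j - \<Gamma> i j) (rvec p q N1 k r0D Ns kap r0J n (m + 1)) i
      = mvec N (\<lambda>i j. q * idm i j + \<Gamma> i j) (rvec p q N1 k r0D Ns kap r0J n m) i"
    unfolding N_def \<Gamma>_def using i avoid_q rho_step_m by (rule rvec_dispersion)
next
  fix n m i j assume "i < N" "j < N"
  show "mmul N (Mmat p q N1 k r0D Ns kap r0J c n m) \<Gamma> i j + mmul N \<Gamma> (Mmat p q N1 k r0D Ns kap r0J c n m) i j
      = rvec p q N1 k r0D Ns kap r0J n m i * c j"
    using nz \<open>i < N\<close> \<open>j < N\<close> unfolding N_def \<Gamma>_def by (rule Mmat_sylvester)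
qed

theorem theorem3:
  fixes p q :: complex and N1 :: nat and Ns :: "nat list"
    and k r0D kap r0J c :: "nat \<Rightarrow> complex"
  defines "N \<equiv> sum_list (N1 # Ns)"
  defines "\<Gamma> \<equiv> Gam N1 k Ns kap"
  assumes Ns_pos: "\<forall>x\<in>set Ns. 1 \<le> x"
    and eig_sum: "\<And>la mu. is_eigenvalue N \<Gamma> la \<Longrightarrow> is_eigenvalue N \<Gamma> mu \<Longrightarrow> la + mu \<noteq> 0"
    and eig_pq: "\<And>la. is_eigenvalue N \<Gamma> la \<Longrightarrow> p \<noteq> la \<and> p \<noteq> - la \<and> q \<noteq> la \<and> q \<noteq> - la"
  shows "sat_eqs N p q \<Gamma> c (rvec p q N1 k r0D Ns kap r0J) (Mmat p q N1 k r0D Ns kap r0J c)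
    \<and> (\<forall>aseq :: nat \<Rightarrow> nat \<Rightarrow> complex.
         sat_eqs N p q \<Gamma> c
           (\<lambda>n m. mvec N (Amat N1 Ns aseq) (rvec p q N1 k r0D Ns kap r0J n m))
           (\<lambda>n m. mmul N (Amat N1 Ns aseq) (Mmat p q N1 k r0D Ns kap r0J c n m)))"
proof -
  let ?lam = "gam_diag N1 k Ns kap"
  have eig: "\<And>i. i < N \<Longrightarrow> is_eigenvalue N \<Gamma> (?lam i)"
    unfolding N_def \<Gamma>_def by (rule gam_diag_eigenvalue)
  have nz: "\<And>i j. i < N \<Longrightarrow> j < N \<Longrightarrow> ?lam i + ?lam j \<noteq> 0" using eig eig_sum by blast
  have avoid: "\<And>i. i < N \<Longrightarrow> ?lam i \<notin> {p, - p, q, - q}" using eig eig_pq by force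
  have S: "sat_eqs N p q \<Gamma> c (rvec p q N1 k r0D Ns kap r0J) (Mmat p q N1 k r0D Ns kap r0J c)"
    using nz avoid unfolding N_def \<Gamma>_def by (rule rvec_Mmat_solution)
  have A: "\<And>aseq a b. a < N \<Longrightarrow> b < N \<Longrightarrow>
      mmul N (Amat N1 Ns aseq) \<Gamma> a b = mmul N \<Gamma> (Amat N1 Ns aseq) a b"
    unfolding Amat_block_toeplitz N_def \<Gamma>_def by (rule block_toeplitz_commute)
  show ?thesis using sat_eqs_commuting_transform[OF S A] S by blast
qed

end
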